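(* In the setting described in the context, the sequence $\hat\zeta_n:=\sum_{k=0}^{n-1}a(k)\hat M_{k+1}$, $n\ge1$, converges almost surely.
   Context: Setting. $S$ is a compact metric space; $h:\mathbb{R}^d\times S\to\mathbb{R}^d$ is jointly continuous and there is $L>0$ with $\lVert h(x_1,y)-h(x_2,y)\rVert\le L\lVert x_1-x_2\rVert$ for all $x_1,x_2,y$. Step sizes $a(n)>0$ satisfy $\sum_n a(n)=\infty$, $\sum_n a(n)^2<\infty$, $\sup_n a(n)\le1$. On a probability space with filtration $\{\mathcal{F}_n\}$, $\{y_n\}_{n\ge0}$ is an $S$-valued adapted process, $x_0$ is $\mathcal{F}_0$-measurable, $\{M_n\}_{n\ge1}$ is a square-integrable martingale difference sequence ($M_{n+1}$ is $\mathcal{F}_{n+1}$-measurable, $E[M_{n+1}\mid\mathcal{F}_n]=0$) with $E[\lVert M_{n+1}\rVert^2\mid\mathcal{F}_n]\le K(1+\lVert x_n\rVert^2)$ for some constant $K>0$, and $x_{n+1}=x_n+a(n)[h(x_n,y_n)+M_{n+1}]$. Rescaling. Fix $T>0$. Let $t(0)=0$, $t(n)=\sum_{i=0}^{n-1}a(i)$; let $\bar x$ be the piecewise linear interpolation with $\bar x(t(n))=x_n$. Let $T_0=0$, $T_n=\min\{t(m):t(m)\ge T_{n-1}+T\}$, $r(n)=\lVert\bar x(T_n)\rVert\vee1$, and $\hat M_{k+1}=M_{k+1}/r(n)$ when $t(k)\in[T_n,T_{n+1})$. *)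

theory Defs
  imports "HOL-Analysis.Analysis" "HOL-Probability.Probability"
begin

definition tseq :: "(nat \<Rightarrow> real) \<Rightarrow> nat \<Rightarrow> real" where
  "tseq a n = (\<Sum>i<n. a i)"

definition xbar :: "(nat \<Rightarrow> real) \<Rightarrow> (nat \<Rightarrow> 'd::real_normed_vector) \<Rightarrow> real \<Rightarrow> 'd" where
  "xbar a x s = (let n = (GREATEST n. tseq a n \<le> s)
                 in x n + ((s - tseq a n) / a n) *\<^sub>R (x (Suc n) - x n))"

primrec Tseq :: "(nat \<Rightarrow> real) \<Rightarrow> real \<Rightarrow> nat \<Rightarrow> real" where
  "Tseq a T 0 = 0"
| "Tseq a T (Suc n) = Inf {tseq a m | m. tseq a m \<ge> Tseq a T n + T}"

definition rfac :: "(nat \<Rightarrow> real) \<Rightarrow> real \<Rightarrow> (nat \<Rightarrow> 'd::real_normed_vector) \<Rightarrow> nat \<Rightarrow> real" where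
  "rfac a T x n = max (norm (xbar a x (Tseq a T n))) 1"

definition blk :: "(nat \<Rightarrow> real) \<Rightarrow> real \<Rightarrow> nat \<Rightarrow> nat" where
  "blk a T k = (GREATEST n. Tseq a T n \<le> tseq a k)"

definition Mhat :: "(nat \<Rightarrow> real) \<Rightarrow> real \<Rightarrow> (nat \<Rightarrow> 'd::real_normed_vector) \<Rightarrow> (nat \<Rightarrow> 'd) \<Rightarrow> nat \<Rightarrow> 'd" where
  "Mhat a T x M k = (1 / rfac a T x (blk a T k)) *\<^sub>R M (Suc k)"
  (* Mhat a T x M k stands for hat M_(k+1) *)

definition zeta_hat :: "(nat \<Rightarrow> real) \<Rightarrow> real \<Rightarrow> (nat \<Rightarrow> 'd::real_normed_vector) \<Rightarrow> (nat \<Rightarrow> 'd) \<Rightarrow> nat \<Rightarrow> 'd" where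
  "zeta_hat a T x M n = (\<Sum>k<n. a k *\<^sub>R Mhat a T x M k)"

end

theory Submission
  imports Defs
begin

text \<open>Coordinatewise, \<open>zeta_hat\<close> is a sum of real martingale differences
  \<open>a k * (M (k+1) \<bullet> i) / r(n)\<close>, and by Kolmogorov's maximal inequality such a sum converges almost
  surely once the variances are summable. As \<open>\<Sum> a k\<^sup>2 < \<infinity>\<close> it suffices that
  \<open>E \<parallel>M (k+1)\<parallel>\<^sup>2 / r(n)\<^sup>2\<close> stays bounded, and by the conditional variance bound this reduces
  to a uniform bound on \<open>E \<parallel>x k / r(n)\<parallel>\<^sup>2\<close>. The latter holds because each block
  \<open>[T n, T (n+1))\<close> has length at most \<open>T + 1\<close>, the rescaled iterate starts the block in the unit
  ball, and along the block its second moment grows at most by a factor \<open>1 + C a k\<close> per step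
  (the drift has linear growth), i.e. by at most \<open>exp (C (T + 1))\<close> overall.\<close>

section \<open>Time grid and blocks\<close>

locale step_sizes =
  fixes a :: "nat \<Rightarrow> real" and T :: real
  assumes a_pos: "\<And>n. a n > 0" and a_div: "\<not> summable a"
    and a_le1: "\<And>n. a n \<le> 1" and T_pos: "T > 0"
begin

lemma tseq_0 [simp]: "tseq a 0 = 0"
  by (simp add: tseq_def)

lemma tseq_Suc: "tseq a (Suc n) = tseq a n + a n"
  by (simp add: tseq_def)

lemma strict_mono_tseq: "strict_mono (tseq a)"
  by (rule strict_monoI_Suc) (simp add: tseq_Suc a_pos)

lemma tseq_less_iff [simp]: "tseq a i < tseq a j \<longleftrightarrow> i < j"
  using strict_mono_tseq by (simp add: strict_mono_less)

lemma tseq_le_iff [simp]: "tseq a i \<le> tseq a j \<longleftrightarrow> i \<le> j"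
  using strict_mono_tseq by (simp add: strict_mono_less_eq)

lemma tseq_nonneg: "0 \<le> tseq a n"
  using tseq_le_iff[of 0 n] by simp

lemma tseq_unbounded: "\<exists>n. B < tseq a n"
proof (rule ccontr)
  assume "\<not> ?thesis"
  hence "\<And>n. tseq a n \<le> B"
    by (simp add: not_less)
  hence "\<And>n. sum a {..n} \<le> B"
    by (metis lessThan_Suc_atMost tseq_def)
  hence "summable a"
    by (rule bounded_imp_summable[rotated]) (simp add: a_pos less_imp_le)
  with a_div show False by simp
qed

lemma Tseq_Suc_least:
  "\<exists>m. Tseq a T (Suc n) = tseq a m \<and> Tseq a T n + T \<le> tseq a m
       \<and> (\<forall>m'<m. tseq a m' < Tseq a T n + T)"
proof -
  define Q where "Q m \<longleftrightarrow> Tseq a T n + T \<le> tseq a m" for m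
  have "\<exists>m. Q m"
    using tseq_unbounded[of "Tseq a T n + T"] unfolding Q_def by (meson less_imp_le)
  define m0 where "m0 = (LEAST m. Q m)"
  have Q0: "Q m0"
    unfolding m0_def using \<open>\<exists>m. Q m\<close> by (rule LeastI_ex)
  have below: "\<not> Q m'" if "m' < m0" for m'
    using that unfolding m0_def by (rule not_less_Least)
  have "Tseq a T (Suc n) = Inf {tseq a m | m. Q m}"
    by (simp add: Q_def)
  also have "\<dots> = tseq a m0"
  proof (rule cInf_eq_minimum)
    fix t assume "t \<in> {tseq a m | m. Q m}"
    then obtain m where "t = tseq a m" "Q m" by blast
    thus "tseq a m0 \<le> t" using below by (auto simp: not_less[symmetric])
  qed (use Q0 in blast)
  finally show ?thesis
    using Q0 below unfolding Q_def by (auto simp: not_le)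
qed

lemma Tseq_Suc_ge: "Tseq a T n + T \<le> Tseq a T (Suc n)"
  using Tseq_Suc_least[of n] by auto

lemma Tseq_ge_linear: "real n * T \<le> Tseq a T n"
proof (induction n)
  case (Suc n)
  thus ?case using Tseq_Suc_ge[of n] by (simp add: distrib_right)
qed simp

lemma Tseq_nonneg: "0 \<le> Tseq a T n"
  using Tseq_ge_linear[of n] T_pos by (smt (verit) mult_nonneg_nonneg of_nat_0_le_iff)

lemma strict_mono_Tseq: "strict_mono (Tseq a T)"
  by (rule strict_monoI_Suc) (smt (verit) Tseq_Suc_ge T_pos)

lemma Tseq_in_range_tseq: "\<exists>m. Tseq a T n = tseq a m"
proof (cases n)
  case 0 thus ?thesis by (auto intro: exI[of _ 0])
next
  case (Suc n')
  thus ?thesis using Tseq_Suc_least[of n'] by auto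
qed

lemma Tseq_Suc_less: "Tseq a T (Suc n) < Tseq a T n + T + 1"
proof -
  obtain m where m: "Tseq a T (Suc n) = tseq a m" "Tseq a T n + T \<le> tseq a m"
    "\<forall>m'<m. tseq a m' < Tseq a T n + T"
    using Tseq_Suc_least[of n] by blast
  obtain m' where m': "m = Suc m'"
    using m(2) T_pos Tseq_nonneg[of n] by (cases m) auto
  have "tseq a m' < Tseq a T n + T"
    using m(3) m' by simp
  thus ?thesis
    using m(1) m' tseq_Suc[of m'] a_le1[of m'] by simp
qed

lemma blk_bounds: "Tseq a T (blk a T k) \<le> tseq a k \<and> tseq a k < Tseq a T (Suc (blk a T k))"
proof -
  define Q where "Q n \<longleftrightarrow> Tseq a T n \<le> tseq a k" for n
  have bound: "n \<le> nat \<lceil>tseq a k / T\<rceil>" if "Q n" for n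
  proof -
    have "real n * T \<le> tseq a k"
      using Tseq_ge_linear[of n] that by (simp add: Q_def)
    hence "real n \<le> tseq a k / T"
      using T_pos by (simp add: field_simps)
    thus ?thesis by linarith
  qed
  have "Q 0"
    by (simp add: Q_def tseq_nonneg)
  hence "Q (Greatest Q)"
    by (rule GreatestI_ex_nat[OF exI bound])
  moreover have "\<not> Q (Suc (Greatest Q))"
  proof
    assume "Q (Suc (Greatest Q))"
    hence "Suc (Greatest Q) \<le> Greatest Q"
      by (rule Greatest_le_nat[OF _ bound])
    thus False by simp
  qed
  ultimately show ?thesis
    unfolding blk_def Q_def by auto
qed

lemma blk_greatest: "Tseq a T n \<le> tseq a k \<Longrightarrow> n \<le> blk a T k"
proof (rule ccontr)
  assume "Tseq a T n \<le> tseq a k" "\<not> n \<le> blk a T k"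
  moreover from this have "Tseq a T (Suc (blk a T k)) \<le> Tseq a T n"
    using strict_mono_Tseq by (simp del: Tseq.simps add: strict_mono_less_eq)
  ultimately show False
    using blk_bounds[of k] by simp
qed

lemma blk_le_Suc: "blk a T k \<le> blk a T (Suc k)"
  by (rule blk_greatest) (smt (verit) blk_bounds tseq_Suc a_pos)

lemma Tseq_blk_Suc_eq:
  assumes "blk a T (Suc k) \<noteq> blk a T k"
  shows "Tseq a T (blk a T (Suc k)) = tseq a (Suc k)"
proof -
  have "Suc (blk a T k) \<le> blk a T (Suc k)"
    using assms blk_le_Suc[of k] by simp
  hence "tseq a k < Tseq a T (blk a T (Suc k))"
    using blk_bounds[of k] strict_mono_Tseq by (smt (verit) strict_mono_less_eq)
  moreover obtain m where m: "Tseq a T (blk a T (Suc k)) = tseq a m"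
    using Tseq_in_range_tseq by blast
  ultimately have "k < m" by simp
  moreover have "m \<le> Suc k"
    using blk_bounds[of "Suc k"] m by simp
  ultimately show ?thesis
    using m by (metis le_antisym Suc_leI)
qed

lemma tseq_minus_Tseq_blk_bounds:
  "0 \<le> tseq a k - Tseq a T (blk a T k)" "tseq a k - Tseq a T (blk a T k) \<le> T + 1"
  using blk_bounds[of k] Tseq_Suc_less[of "blk a T k"] by simp_all

lemma xbar_tseq: "xbar a x (tseq a m) = x m"
proof -
  have "(GREATEST n. tseq a n \<le> tseq a m) = m"
    by (rule Greatest_equality) auto
  thus ?thesis by (simp add: xbar_def Let_def)
qed

lemma rfac_blk_eq: "\<exists>m\<le>k. \<forall>x. rfac a T x (blk a T k) = max (norm (x m)) 1"
proof -
  obtain m where m: "Tseq a T (blk a T k) = tseq a m"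
    using Tseq_in_range_tseq by blast
  hence "m \<le> k"
    using blk_bounds[of k] by simp
  with m show ?thesis
    by (auto simp: rfac_def xbar_tseq)
qed

lemma rfac_blk_Suc:
  "blk a T (Suc k) \<noteq> blk a T k \<Longrightarrow> rfac a T x (blk a T (Suc k)) = max (norm (x (Suc k))) 1"
  using Tseq_blk_Suc_eq by (simp add: rfac_def xbar_tseq)

end

section \<open>Almost sure convergence of square-integrable martingales\<close>

lemma integrable_mult_if_square_integrable:
  fixes f g :: "'w \<Rightarrow> real"
  assumes "integrable M (\<lambda>x. (f x)\<^sup>2)" "integrable M (\<lambda>x. (g x)\<^sup>2)"
    and "f \<in> borel_measurable M" "g \<in> borel_measurable M"
  shows "integrable M (\<lambda>x. f x * g x)"
proof (rule Bochner_Integration.integrable_bound[of _ "\<lambda>x. (f x)\<^sup>2 + (g x)\<^sup>2"])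
  show "integrable M (\<lambda>x. (f x)\<^sup>2 + (g x)\<^sup>2)"
    using assms by auto
  show "(\<lambda>x. f x * g x) \<in> borel_measurable M"
    using assms by measurable
  show "AE x in M. norm (f x * g x) \<le> norm ((f x)\<^sup>2 + (g x)\<^sup>2)"
  proof (intro AE_I2)
    fix x
    have "2 * (\<bar>f x\<bar> * \<bar>g x\<bar>) \<le> (f x)\<^sup>2 + (g x)\<^sup>2"
      using sum_squares_bound[of "\<bar>f x\<bar>" "\<bar>g x\<bar>"] by (simp add: mult.assoc)
    moreover have "0 \<le> \<bar>f x\<bar> * \<bar>g x\<bar>"
      by simp
    ultimately have "\<bar>f x\<bar> * \<bar>g x\<bar> \<le> (f x)\<^sup>2 + (g x)\<^sup>2"
      by linarith
    thus "norm (f x * g x) \<le> norm ((f x)\<^sup>2 + (g x)\<^sup>2)"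
      by (simp add: abs_mult)
  qed
qed

lemma filtration_measurable_mono:
  "filtration \<Omega> F \<Longrightarrow> i \<le> j \<Longrightarrow> f \<in> measurable (F i) N \<Longrightarrow> f \<in> measurable (F j) N"
  by (rule measurable_from_subalg[of "F j" "F i"])
     (auto simp: subalgebra_def filtration.space_F filtration.sets_F_mono)

definition first_passage :: "real \<Rightarrow> (nat \<Rightarrow> real) \<Rightarrow> nat \<Rightarrow> bool" where
  "first_passage \<epsilon> s j \<longleftrightarrow> \<epsilon> \<le> \<bar>s j\<bar> \<and> (\<forall>i<j. \<bar>s i\<bar> < \<epsilon>)"

lemma first_passage_unique: "first_passage \<epsilon> s i \<Longrightarrow> first_passage \<epsilon> s j \<Longrightarrow> i = j"
  unfolding first_passage_def by (metis linorder_neqE_nat not_le)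

lemma first_passage_exists:
  assumes "\<epsilon> \<le> \<bar>s j\<bar>"
  shows "\<exists>i\<le>j. first_passage \<epsilon> s i"
proof (intro exI conjI)
  show "(LEAST i. \<epsilon> \<le> \<bar>s i\<bar>) \<le> j"
    using assms by (rule Least_le)
  show "first_passage \<epsilon> s (LEAST i. \<epsilon> \<le> \<bar>s i\<bar>)"
    unfolding first_passage_def using assms
    by (metis (mono_tags, lifting) LeastI not_less_Least not_le)
qed

text \<open>This pointwise inequality integrates to Kolmogorov's maximal inequality: the sum on the
  left picks out the increment after the first passage of \<open>\<bar>s\<bar>\<close> above \<open>\<epsilon>\<close>.\<close>

lemma first_passage_square_bound:
  fixes s :: "nat \<Rightarrow> real"
  assumes "0 \<le> \<epsilon>"
  shows "\<epsilon>\<^sup>2 * of_bool (\<exists>j\<le>n. \<epsilon> \<le> \<bar>s j\<bar>)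
           + 2 * (\<Sum>j\<le>n. of_bool (first_passage \<epsilon> s j) * (s j * (s n - s j))) \<le> (s n)\<^sup>2"
proof (cases "\<exists>j\<le>n. \<epsilon> \<le> \<bar>s j\<bar>")
  case False
  hence "\<not> first_passage \<epsilon> s j" if "j \<le> n" for j
    using that by (auto simp: first_passage_def)
  with False show ?thesis by auto
next
  case True
  then obtain j where j: "j \<le> n" "\<epsilon> \<le> \<bar>s j\<bar>"
    by blast
  then obtain j0 where "j0 \<le> j" "first_passage \<epsilon> s j0"
    using first_passage_exists by blast
  with j have j0: "j0 \<le> n" "first_passage \<epsilon> s j0"
    by simp_all
  have "(\<Sum>j\<le>n. of_bool (first_passage \<epsilon> s j) * (s j * (s n - s j))) = s j0 * (s n - s j0)"
  proof -
    have "of_bool (first_passage \<epsilon> s j) = (0::real)" if "j \<noteq> j0" for j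
      using first_passage_unique[OF j0(2), of j] that by auto
    thus ?thesis
      using j0 by (subst sum.remove[of _ j0]) (auto intro!: sum.neutral)
  qed
  moreover have "\<epsilon>\<^sup>2 \<le> (s j0)\<^sup>2"
    using j0(2) assms abs_le_square_iff[of \<epsilon> "s j0"] by (simp add: first_passage_def)
  moreover have "0 \<le> (s n - s j0)\<^sup>2"
    by simp
  ultimately show ?thesis
    using True by (simp add: power2_eq_square algebra_simps)
qed

lemma convergent_if_eventually_small_deviation:
  fixes s :: "nat \<Rightarrow> real"
  assumes "\<And>e. e > 0 \<Longrightarrow> \<exists>m. \<forall>j. \<bar>s (m + j) - s m\<bar> < e"
  shows "convergent s"
proof -
  have "Cauchy s"
  proof (rule metric_CauchyI)
    fix e :: real assume "e > 0"
    then obtain m where m: "\<forall>j. \<bar>s (m + j) - s m\<bar> < e / 2"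
      using assms[of "e / 2"] by auto
    have "dist (s i) (s j) < e" if "m \<le> i" "m \<le> j" for i j
      using m[rule_format, of "i - m"] m[rule_format, of "j - m"] that
      by (simp add: dist_real_def) (smt (verit))
    thus "\<exists>M. \<forall>i\<ge>M. \<forall>j\<ge>M. dist (s i) (s j) < e" by blast
  qed
  thus ?thesis by (simp add: Cauchy_convergent_iff)
qed

text \<open>Real-valued square-integrable martingale differences, with orthogonality to the past in
  place of vanishing conditional expectations.\<close>

locale sq_int_mart_diff =
  fixes P :: "'w measure" and G :: "nat \<Rightarrow> 'w measure" and d :: "nat \<Rightarrow> 'w \<Rightarrow> real"
  assumes prob: "prob_space P"
    and filtration: "filtration (space P) G"
    and subalg: "\<And>k. subalgebra P (G k)"
    and d_measurable: "\<And>k. d k \<in> borel_measurable (G (Suc k))"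
    and d_square_integrable: "\<And>k. integrable P (\<lambda>\<omega>. (d k \<omega>)\<^sup>2)"
    and d_orthogonal: "\<And>k g. g \<in> borel_measurable (G k) \<Longrightarrow> integrable P (\<lambda>\<omega>. g \<omega> * d k \<omega>)
        \<Longrightarrow> (\<integral>\<omega>. g \<omega> * d k \<omega> \<partial>P) = 0"
begin

definition psum :: "nat \<Rightarrow> 'w \<Rightarrow> real" where
  "psum n \<omega> = (\<Sum>k<n. d k \<omega>)"

lemma measurable_P_if_measurable_G: "f \<in> borel_measurable (G i) \<Longrightarrow> f \<in> borel_measurable P"
  using measurable_from_subalg subalg by blast

lemma d_measurable_P [measurable]: "d k \<in> borel_measurable P"
  using measurable_P_if_measurable_G d_measurable by blast

lemma psum_measurable: "j \<le> n \<Longrightarrow> psum j \<in> borel_measurable (G n)"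
  unfolding psum_def
  by (rule borel_measurable_sum)
     (meson d_measurable filtration_measurable_mono[OF filtration] lessThan_iff Suc_leI le_trans)

lemma psum_measurable_P [measurable]: "psum j \<in> borel_measurable P"
  using psum_measurable measurable_P_if_measurable_G by blast

lemma psum_square_integral:
  "integrable P (\<lambda>\<omega>. (psum n \<omega>)\<^sup>2) \<and> (\<integral>\<omega>. (psum n \<omega>)\<^sup>2 \<partial>P) = (\<Sum>k<n. \<integral>\<omega>. (d k \<omega>)\<^sup>2 \<partial>P)"
proof (induction n)
  case 0
  thus ?case by (simp add: psum_def)
next
  case (Suc n)
  have int: "integrable P (\<lambda>\<omega>. psum n \<omega> * d n \<omega>)"
    by (rule integrable_mult_if_square_integrable) (use Suc d_square_integrable in auto)
  have orth: "(\<integral>\<omega>. psum n \<omega> * d n \<omega> \<partial>P) = 0"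
    by (rule d_orthogonal[OF psum_measurable int]) simp
  have "(\<lambda>\<omega>. (psum (Suc n) \<omega>)\<^sup>2) = (\<lambda>\<omega>. (psum n \<omega>)\<^sup>2 + 2 * (psum n \<omega> * d n \<omega>) + (d n \<omega>)\<^sup>2)"
    by (simp add: psum_def power2_eq_square algebra_simps)
  thus ?case
    using Suc int d_square_integrable[of n] orth by simp
qed

lemma psum_diff: "j \<le> n \<Longrightarrow> psum n \<omega> - psum j \<omega> = (\<Sum>k\<in>{j..<n}. d k \<omega>)"
  unfolding psum_def using sum.atLeastLessThan_concat[of 0 j n "\<lambda>k. d k \<omega>"]
  by (simp add: atLeast0LessThan)

definition passage_set :: "real \<Rightarrow> nat \<Rightarrow> 'w set" where
  "passage_set \<epsilon> j = {\<omega> \<in> space P. first_passage \<epsilon> (\<lambda>i. psum i \<omega>) j}"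

lemma passage_set_in_G: "passage_set \<epsilon> j \<in> sets (G j)"
proof -
  have [measurable]: "\<And>i. i \<le> j \<Longrightarrow> psum i \<in> borel_measurable (G j)"
    using psum_measurable by blast
  have "passage_set \<epsilon> j = {\<omega> \<in> space (G j). \<epsilon> \<le> \<bar>psum j \<omega>\<bar> \<and> (\<forall>i<j. \<bar>psum i \<omega>\<bar> < \<epsilon>)}"
    using filtration.space_F[OF filtration]
    by (simp add: passage_set_def first_passage_def)
  also have "\<dots> \<in> sets (G j)"
    by measurable
  finally show ?thesis .
qed

lemma passage_increment_integral_zero:
  fixes \<epsilon> :: real
  assumes "j \<le> n"
  defines "Y \<equiv> \<lambda>\<omega>. indicator (passage_set \<epsilon> j) \<omega> * (psum j \<omega> * (psum n \<omega> - psum j \<omega>))"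
  shows "integrable P Y" and "(\<integral>\<omega>. Y \<omega> \<partial>P) = 0"
proof -
  define g where "g \<omega> = indicator (passage_set \<epsilon> j) \<omega> * psum j \<omega>" for \<omega>
  have g_measurable: "g \<in> borel_measurable (G k)" if "j \<le> k" for k
  proof -
    have "g \<in> borel_measurable (G j)"
      unfolding g_def using passage_set_in_G psum_measurable[of j j] by measurable
    thus ?thesis using filtration_measurable_mono[OF filtration that] by blast
  qed
  have g_int: "integrable P (\<lambda>\<omega>. g \<omega> * d k \<omega>)" if "j \<le> k" for k
  proof (rule Bochner_Integration.integrable_bound[of _ "\<lambda>\<omega>. psum j \<omega> * d k \<omega>"])
    show "integrable P (\<lambda>\<omega>. psum j \<omega> * d k \<omega>)"
      by (rule integrable_mult_if_square_integrable)
         (use psum_square_integral d_square_integrable in auto)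
    show "(\<lambda>\<omega>. g \<omega> * d k \<omega>) \<in> borel_measurable P"
      using measurable_P_if_measurable_G[OF g_measurable[OF that]] by measurable
    show "AE \<omega> in P. norm (g \<omega> * d k \<omega>) \<le> norm (psum j \<omega> * d k \<omega>)"
      by (auto simp: g_def indicator_def abs_mult)
  qed
  have Y_eq: "Y = (\<lambda>\<omega>. \<Sum>k\<in>{j..<n}. g \<omega> * d k \<omega>)"
    by (simp add: Y_def g_def psum_diff[OF assms(1)] sum_distrib_left mult.assoc)
  show "integrable P Y"
    unfolding Y_eq using g_int by auto
  show "(\<integral>\<omega>. Y \<omega> \<partial>P) = 0"
    unfolding Y_eq using g_int d_orthogonal[OF g_measurable g_int]
    by (simp add: Bochner_Integration.integral_sum)
qed

lemma kolmogorov_maximal_inequality: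
  assumes "\<epsilon> > 0"
  shows "measure P {\<omega> \<in> space P. \<exists>j\<le>n. \<epsilon> \<le> \<bar>psum j \<omega>\<bar>} \<le> (\<Sum>k<n. \<integral>\<omega>. (d k \<omega>)\<^sup>2 \<partial>P) / \<epsilon>\<^sup>2"
proof -
  interpret prob_space P by (rule prob)
  define E where "E = {\<omega> \<in> space P. \<exists>j\<le>n. \<epsilon> \<le> \<bar>psum j \<omega>\<bar>}"
  define Y where "Y \<omega> = (\<Sum>j\<le>n. indicator (passage_set \<epsilon> j) \<omega> * (psum j \<omega> * (psum n \<omega> - psum j \<omega>)))"
    for \<omega>
  have E_sets [measurable]: "E \<in> sets P"
    unfolding E_def by measurable
  have E_int: "integrable P (\<lambda>\<omega>. \<epsilon>\<^sup>2 * indicator E \<omega>)"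
    by (auto intro!: integrable_real_indicator simp: emeasure_eq_measure)
  have Y_int: "integrable P Y"
    unfolding Y_def by (intro Bochner_Integration.integrable_sum passage_increment_integral_zero) simp
  have "(\<integral>\<omega>. Y \<omega> \<partial>P)
        = (\<Sum>j\<le>n. \<integral>\<omega>. indicator (passage_set \<epsilon> j) \<omega> * (psum j \<omega> * (psum n \<omega> - psum j \<omega>)) \<partial>P)"
    unfolding Y_def by (intro Bochner_Integration.integral_sum passage_increment_integral_zero) simp
  also have "\<dots> = 0"
    by (intro sum.neutral ballI passage_increment_integral_zero) simp
  finally have Y_zero: "(\<integral>\<omega>. Y \<omega> \<partial>P) = 0" .
  have "\<epsilon>\<^sup>2 * measure P E = (\<integral>\<omega>. \<epsilon>\<^sup>2 * indicator E \<omega> + 2 * Y \<omega> \<partial>P)"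
    using E_int Y_int Y_zero by simp
  also have "\<dots> \<le> (\<integral>\<omega>. (psum n \<omega>)\<^sup>2 \<partial>P)"
  proof (rule integral_mono)
    show "integrable P (\<lambda>\<omega>. \<epsilon>\<^sup>2 * indicator E \<omega> + 2 * Y \<omega>)"
      using E_int Y_int by auto
    show "integrable P (\<lambda>\<omega>. (psum n \<omega>)\<^sup>2)"
      using psum_square_integral by blast
    fix \<omega> assume "\<omega> \<in> space P"
    thus "\<epsilon>\<^sup>2 * indicator E \<omega> + 2 * Y \<omega> \<le> (psum n \<omega>)\<^sup>2"
      using first_passage_square_bound[of \<epsilon> n "\<lambda>i. psum i \<omega>"] assms
      by (simp add: E_def Y_def passage_set_def indicator_def of_bool_def)
  qed
  also have "\<dots> = (\<Sum>k<n. \<integral>\<omega>. (d k \<omega>)\<^sup>2 \<partial>P)"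
    using psum_square_integral by blast
  finally show ?thesis
    using assms unfolding E_def by (simp add: pos_le_divide_eq mult.commute)
qed

lemma sq_int_mart_diff_shift: "sq_int_mart_diff P (\<lambda>k. G (m + k)) (\<lambda>k. d (m + k))"
proof (rule sq_int_mart_diff.intro)
  show "filtration (space P) (\<lambda>k. G (m + k))"
    by unfold_locales
       (simp_all add: filtration.space_F[OF filtration] filtration.sets_F_mono[OF filtration])
qed (use prob subalg d_measurable d_square_integrable d_orthogonal in auto)

lemma measure_tail_deviation_le:
  assumes "\<epsilon> > 0" and summable: "summable (\<lambda>k. \<integral>\<omega>. (d k \<omega>)\<^sup>2 \<partial>P)"
  shows "measure P {\<omega> \<in> space P. \<exists>j. \<epsilon> \<le> \<bar>psum (m + j) \<omega> - psum m \<omega>\<bar>}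
           \<le> (\<Sum>k. \<integral>\<omega>. (d (k + m) \<omega>)\<^sup>2 \<partial>P) / \<epsilon>\<^sup>2"
proof -
  interpret prob_space P by (rule prob)
  interpret shifted: sq_int_mart_diff P "\<lambda>k. G (m + k)" "\<lambda>k. d (m + k)"
    by (rule sq_int_mart_diff_shift)
  have psum_shift: "shifted.psum j \<omega> = psum (m + j) \<omega> - psum m \<omega>" for j \<omega>
    by (induction j) (simp_all add: psum_def shifted.psum_def)
  define C where "C n = {\<omega> \<in> space P. \<exists>j\<le>n. \<epsilon> \<le> \<bar>shifted.psum j \<omega>\<bar>}" for n
  have "(\<lambda>n. measure P (C n)) \<longlonglongrightarrow> measure P (\<Union>(range C))"
    by (rule finite_Lim_measure_incseq) (auto simp: C_def incseq_def intro: order_trans)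
  moreover have "measure P (C n) \<le> (\<Sum>k. \<integral>\<omega>. (d (k + m) \<omega>)\<^sup>2 \<partial>P) / \<epsilon>\<^sup>2" for n
  proof -
    have "measure P (C n) \<le> (\<Sum>k<n. \<integral>\<omega>. (d (m + k) \<omega>)\<^sup>2 \<partial>P) / \<epsilon>\<^sup>2"
      unfolding C_def by (rule shifted.kolmogorov_maximal_inequality[OF assms(1)])
    also have "(\<Sum>k<n. \<integral>\<omega>. (d (m + k) \<omega>)\<^sup>2 \<partial>P) \<le> (\<Sum>k. \<integral>\<omega>. (d (k + m) \<omega>)\<^sup>2 \<partial>P)"
      using sum_le_suminf[OF summable_ignore_initial_segment[OF summable, of m], of "{..<n}"]
      by (simp add: add.commute Bochner_Integration.integral_nonneg)
    finally show ?thesis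
      by (simp add: divide_right_mono)
  qed
  ultimately have "measure P (\<Union>(range C)) \<le> (\<Sum>k. \<integral>\<omega>. (d (k + m) \<omega>)\<^sup>2 \<partial>P) / \<epsilon>\<^sup>2"
    by (intro LIMSEQ_le_const2) auto
  moreover have "{\<omega> \<in> space P. \<exists>j. \<epsilon> \<le> \<bar>psum (m + j) \<omega> - psum m \<omega>\<bar>} = \<Union>(range C)"
    by (auto simp: C_def psum_shift)
  ultimately show ?thesis by simp
qed

lemma AE_eventually_small_deviation:
  assumes "\<epsilon> > 0" and summable: "summable (\<lambda>k. \<integral>\<omega>. (d k \<omega>)\<^sup>2 \<partial>P)"
  shows "AE \<omega> in P. \<exists>m. \<forall>j. \<bar>psum (m + j) \<omega> - psum m \<omega>\<bar> < \<epsilon>"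
proof (rule AE_I')
  interpret prob_space P by (rule prob)
  define N where "N = {\<omega> \<in> space P. \<forall>m. \<exists>j. \<epsilon> \<le> \<bar>psum (m + j) \<omega> - psum m \<omega>\<bar>}"
  show "{\<omega> \<in> space P. \<not> (\<exists>m. \<forall>j. \<bar>psum (m + j) \<omega> - psum m \<omega>\<bar> < \<epsilon>)} \<subseteq> N"
    by (auto simp: N_def not_less)
  have N_sets [measurable]: "N \<in> sets P"
    unfolding N_def by measurable
  have "measure P N \<le> (\<Sum>k. \<integral>\<omega>. (d (k + m) \<omega>)\<^sup>2 \<partial>P) / \<epsilon>\<^sup>2" for m
    using measure_tail_deviation_le[OF assms, of m]
    by (rule order_trans[rotated], intro finite_measure_mono) (auto simp: N_def)
  moreover have "(\<lambda>m. (\<Sum>k. \<integral>\<omega>. (d (k + m) \<omega>)\<^sup>2 \<partial>P) / \<epsilon>\<^sup>2) \<longlonglongrightarrow> 0 / \<epsilon>\<^sup>2"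
    by (intro tendsto_divide tendsto_const suminf_exist_split2[OF summable]) (use assms in auto)
  ultimately have "measure P N \<le> 0"
    by (intro LIMSEQ_le_const[of _ 0]) auto
  thus "N \<in> null_sets P"
    using N_sets by (simp add: emeasure_eq_measure null_sets_def measure_le_0_iff)
qed

theorem AE_convergent_psum:
  assumes "summable (\<lambda>k. \<integral>\<omega>. (d k \<omega>)\<^sup>2 \<partial>P)"
  shows "AE \<omega> in P. convergent (\<lambda>n. psum n \<omega>)"
proof -
  have "AE \<omega> in P. \<forall>p::nat. \<exists>m. \<forall>j. \<bar>psum (m + j) \<omega> - psum m \<omega>\<bar> < inverse (Suc p)"
    using AE_eventually_small_deviation[OF _ assms] by (subst AE_all_countable) auto
  thus ?thesis
  proof (rule eventually_mono)
    fix \<omega> assume small: "\<forall>p::nat. \<exists>m. \<forall>j. \<bar>psum (m + j) \<omega> - psum m \<omega>\<bar> < inverse (Suc p)"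
    show "convergent (\<lambda>n. psum n \<omega>)"
    proof (rule convergent_if_eventually_small_deviation)
      fix e :: real assume "e > 0"
      then obtain p where "inverse (Suc p) < e"
        using reals_Archimedean by blast
      thus "\<exists>m. \<forall>j. \<bar>psum (m + j) \<omega> - psum m \<omega>\<bar> < e"
        using small by (meson order.strict_trans)
    qed
  qed
qed

end

section \<open>Measurability and linear growth of the drift\<close>

text \<open>Countable-range approximations of a Borel variable, to be fed into the first argument
  of \<open>h\<close>.\<close>

definition grid_round :: "nat \<Rightarrow> 'd::euclidean_space \<Rightarrow> 'd" where
  "grid_round j u = (\<Sum>i\<in>Basis. (of_int \<lfloor>real (Suc j) * (u \<bullet> i)\<rfloor> / real (Suc j)) *\<^sub>R i)"

lemma grid_round_measurable [measurable]: "grid_round j \<in> borel_measurable borel"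
  unfolding grid_round_def by measurable

lemma norm_grid_round_diff_le:
  fixes u :: "'d::euclidean_space"
  shows "norm (grid_round j u - u) \<le> real DIM('d) / real (Suc j)"
proof -
  define e where "e i = of_int \<lfloor>real (Suc j) * (u \<bullet> i)\<rfloor> / real (Suc j) - u \<bullet> i" for i
  have "grid_round j u - u = (\<Sum>i\<in>Basis. e i *\<^sub>R i)"
    unfolding grid_round_def e_def
    by (subst (2) euclidean_representation[symmetric]) (simp add: sum_subtractf scaleR_diff_left)
  also have "norm \<dots> \<le> (\<Sum>i\<in>(Basis::'d set). norm (e i *\<^sub>R i))"
    by (rule norm_sum)
  also have "\<dots> \<le> (\<Sum>i\<in>(Basis::'d set). 1 / real (Suc j))"
  proof (rule sum_mono)
    fix i :: 'd assume "i \<in> Basis"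
    define s where "s = real (Suc j) * (u \<bullet> i)"
    have "e i = (of_int \<lfloor>s\<rfloor> - s) / real (Suc j)"
      by (simp add: e_def s_def diff_divide_distrib)
    moreover have "\<bar>of_int \<lfloor>s\<rfloor> - s\<bar> \<le> 1"
      by linarith
    ultimately have "\<bar>e i\<bar> \<le> 1 / real (Suc j)"
      by (simp add: divide_right_mono)
    thus "norm (e i *\<^sub>R i) \<le> 1 / real (Suc j)"
      using \<open>i \<in> Basis\<close> by simp
  qed
  also have "\<dots> = real DIM('d) / real (Suc j)"
    by simp
  finally show ?thesis .
qed

lemma grid_round_tendsto: "(\<lambda>j. grid_round j u) \<longlonglongrightarrow> u"
  for u :: "'d::euclidean_space"
proof (rule metric_tendsto_imp_tendsto)
  show "(\<lambda>j. real DIM('d) / real (Suc j)) \<longlonglongrightarrow> 0"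
    using LIMSEQ_Suc[OF lim_const_over_n[of "real DIM('d)"]] by simp
  show "\<forall>\<^sub>F j in sequentially. dist (grid_round j u) u \<le> dist (real DIM('d) / real (Suc j)) 0"
    using norm_grid_round_diff_le[of j u for j] by (simp add: dist_norm)
qed

lemma countable_range_grid_round: "countable (range (grid_round j :: 'd::euclidean_space \<Rightarrow> 'd))"
proof -
  define g where "g f = (\<Sum>i\<in>(Basis::'d set). (of_int (f i) / real (Suc j)) *\<^sub>R i)"
    for f :: "'d \<Rightarrow> int"
  have "range (grid_round j :: 'd \<Rightarrow> 'd) \<subseteq> g ` (Basis \<rightarrow>\<^sub>E UNIV)"
  proof
    fix v assume "v \<in> range (grid_round j :: 'd \<Rightarrow> 'd)"
    then obtain u where u: "v = grid_round j u" by blast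
    have "v = g (restrict (\<lambda>i. \<lfloor>real (Suc j) * (u \<bullet> i)\<rfloor>) Basis)"
      unfolding u g_def grid_round_def by (intro sum.cong) auto
    thus "v \<in> g ` (Basis \<rightarrow>\<^sub>E UNIV)" by (rule image_eqI[where f=g]) simp
  qed
  moreover have "countable (g ` (Basis \<rightarrow>\<^sub>E UNIV))"
    by (intro countable_image countable_PiE) auto
  ultimately show ?thesis by (rule countable_subset)
qed

lemma grid_round_measurable_count_space:
  fixes X :: "'w \<Rightarrow> 'd::euclidean_space"
  assumes [measurable]: "X \<in> borel_measurable M"
  shows "(\<lambda>\<omega>. grid_round j (X \<omega>)) \<in> M \<rightarrow>\<^sub>M count_space (range (grid_round j))"
proof -
  have "{\<omega> \<in> space M. grid_round j (X \<omega>) = v} \<in> sets M" for v :: 'd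
    by measurable
  moreover have "(\<lambda>\<omega>. grid_round j (X \<omega>)) -` {v} \<inter> space M = {\<omega> \<in> space M. grid_round j (X \<omega>) = v}"
    for v
    by auto
  ultimately show ?thesis
    unfolding measurable_count_space_eq_countable[OF countable_range_grid_round] by auto
qed

text \<open>No second countability is available on \<open>'s\<close>, so joint measurability of
  \<open>\<lambda>\<omega>. h (X \<omega>) (Y \<omega>)\<close> is obtained from the uniform Lipschitz bound in the first argument.\<close>

lemma borel_measurable_lipschitz_compose:
  fixes h :: "'d::euclidean_space \<Rightarrow> 's::metric_space \<Rightarrow> 'e::real_normed_vector"
  assumes cont: "continuous_on (UNIV \<times> S) (\<lambda>(u, v). h u v)"
    and lip: "\<And>x1 x2 v. v \<in> S \<Longrightarrow> norm (h x1 v - h x2 v) \<le> L * norm (x1 - x2)"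
    and X: "X \<in> borel_measurable M" and Y: "Y \<in> measurable M borel"
    and Y_in_S: "\<And>\<omega>. \<omega> \<in> space M \<Longrightarrow> Y \<omega> \<in> S"
  shows "(\<lambda>\<omega>. h (X \<omega>) (Y \<omega>)) \<in> borel_measurable M"
proof (rule borel_measurable_LIMSEQ_metric)
  have fixed: "(\<lambda>\<omega>. h c (Y \<omega>)) \<in> borel_measurable M" for c
  proof -
    have "continuous_on S (\<lambda>v. (\<lambda>(u, v). h u v) (c, v))"
      by (rule continuous_on_compose2[OF cont]) (auto intro!: continuous_intros)
    hence "h c \<in> borel_measurable (restrict_space borel S)"
      by (intro borel_measurable_continuous_on_restrict) simp
    moreover have "Y \<in> measurable M (restrict_space borel S)"
      by (rule measurable_restrict_space2) (use Y_in_S Y in auto)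
    ultimately show ?thesis by (rule measurable_compose[rotated])
  qed
  show "(\<lambda>\<omega>. h (grid_round j (X \<omega>)) (Y \<omega>)) \<in> borel_measurable M" for j
    by (rule measurable_compose_countable'[OF fixed grid_round_measurable_count_space[OF X]])
       (rule countable_range_grid_round)
  fix \<omega> assume \<omega>: "\<omega> \<in> space M"
  show "(\<lambda>j. h (grid_round j (X \<omega>)) (Y \<omega>)) \<longlonglongrightarrow> h (X \<omega>) (Y \<omega>)"
  proof (rule metric_tendsto_imp_tendsto)
    show "(\<lambda>j. L * dist (grid_round j (X \<omega>)) (X \<omega>)) \<longlonglongrightarrow> L * 0"
      by (intro tendsto_mult tendsto_const)
         (use tendsto_dist[OF grid_round_tendsto[of "X \<omega>"] tendsto_const[of "X \<omega>"]] in simp)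
    have "dist (h (grid_round j (X \<omega>)) (Y \<omega>)) (h (X \<omega>) (Y \<omega>))
            \<le> dist (L * dist (grid_round j (X \<omega>)) (X \<omega>)) (L * 0)" for j
      using lip[OF Y_in_S[OF \<omega>], of "grid_round j (X \<omega>)" "X \<omega>"]
        abs_ge_self[of "L * norm (grid_round j (X \<omega>) - X \<omega>)"]
      by (simp add: dist_norm)
    thus "\<forall>\<^sub>F j in sequentially. dist (h (grid_round j (X \<omega>)) (Y \<omega>)) (h (X \<omega>) (Y \<omega>))
            \<le> dist (L * dist (grid_round j (X \<omega>)) (X \<omega>)) (L * 0)"
      by simp
  qed
qed

lemma continuous_lipschitz_linear_growth:
  fixes h :: "'d::real_normed_vector \<Rightarrow> 's::metric_space \<Rightarrow> 'e::real_normed_vector"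
  assumes "compact S" and cont: "continuous_on (UNIV \<times> S) (\<lambda>(u, v). h u v)"
    and lip: "\<And>x1 x2 v. v \<in> S \<Longrightarrow> norm (h x1 v - h x2 v) \<le> L * norm (x1 - x2)"
  obtains H0 where "0 \<le> H0" "\<And>u v. v \<in> S \<Longrightarrow> norm (h u v) \<le> H0 + L * norm u"
proof -
  have "continuous_on S (\<lambda>v. (\<lambda>(u, v). h u v) (0, v))"
    by (rule continuous_on_compose2[OF cont]) (auto intro!: continuous_intros)
  hence "compact (h 0 ` S)"
    using \<open>compact S\<close> by (intro compact_continuous_image) simp
  then obtain B where B: "\<And>v. v \<in> S \<Longrightarrow> norm (h 0 v) \<le> B"
    using compact_imp_bounded bounded_iff by (metis imageI)
  have "norm (h u v) \<le> max B 0 + L * norm u" if "v \<in> S" for u v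
    using lip[OF that, of u 0] B[OF that] norm_triangle_ineq2[of "h u v" "h 0 v"] by simp
  thus ?thesis
    using that[of "max B 0"] by simp
qed

lemma norm_add_scaleR_square_le:
  fixes z w m :: "'d::real_normed_vector"
  assumes "0 \<le> \<alpha>" "\<alpha> \<le> 1" and w: "norm w \<le> H0 + L * norm z" and "0 \<le> H0" "0 \<le> L"
  shows "(norm (z + \<alpha> *\<^sub>R (w + m)))\<^sup>2
     \<le> (1 + \<alpha> * (1 + 6 * L\<^sup>2)) * (norm z)\<^sup>2 + \<alpha> * (6 * H0\<^sup>2) + \<alpha> * (6 * (norm m)\<^sup>2)"
proof -
  define p where "p = norm z"
  define q where "q = H0 + L * p + norm m"
  have "0 \<le> p" "0 \<le> q"
    using assms by (simp_all add: p_def q_def)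
  have "norm (z + \<alpha> *\<^sub>R (w + m)) \<le> p + \<alpha> * norm (w + m)"
    using norm_triangle_ineq[of z "\<alpha> *\<^sub>R (w + m)"] assms by (simp add: p_def)
  also have "\<dots> \<le> p + \<alpha> * q"
    using norm_triangle_ineq[of w m] w assms by (simp add: q_def p_def mult_left_mono)
  finally have "(norm (z + \<alpha> *\<^sub>R (w + m)))\<^sup>2 \<le> (p + \<alpha> * q)\<^sup>2"
    by (intro power_mono) simp_all
  also have "\<dots> = p\<^sup>2 + \<alpha> * (2 * p * q) + \<alpha>\<^sup>2 * q\<^sup>2"
    by (simp add: power2_eq_square algebra_simps)
  also have "\<dots> \<le> p\<^sup>2 + \<alpha> * (p\<^sup>2 + q\<^sup>2) + \<alpha> * q\<^sup>2"
  proof -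
    have "\<alpha> * (2 * p * q) \<le> \<alpha> * (p\<^sup>2 + q\<^sup>2)"
      using sum_squares_bound[of p q] assms by (simp add: mult_left_mono)
    moreover have "\<alpha>\<^sup>2 * q\<^sup>2 \<le> \<alpha> * q\<^sup>2"
      using assms by (intro mult_right_mono) (simp_all add: power2_eq_square mult_left_le)
    ultimately show ?thesis by simp
  qed
  also have "\<dots> \<le> p\<^sup>2 + \<alpha> * (p\<^sup>2 + 3 * (H0\<^sup>2 + L\<^sup>2 * p\<^sup>2 + (norm m)\<^sup>2))
                  + \<alpha> * (3 * (H0\<^sup>2 + L\<^sup>2 * p\<^sup>2 + (norm m)\<^sup>2))"
  proof -
    have "0 \<le> (H0 - L * p)\<^sup>2 + (H0 - norm m)\<^sup>2 + (L * p - norm m)\<^sup>2"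
      by simp
    hence "q\<^sup>2 \<le> 3 * (H0\<^sup>2 + L\<^sup>2 * p\<^sup>2 + (norm m)\<^sup>2)"
      unfolding q_def by (simp add: power2_eq_square algebra_simps)
    thus ?thesis
      using assms by (intro add_mono mult_left_mono) simp_all
  qed
  also have "\<dots> = (1 + \<alpha> * (1 + 6 * L\<^sup>2)) * p\<^sup>2 + \<alpha> * (6 * H0\<^sup>2) + \<alpha> * (6 * (norm m)\<^sup>2)"
    by (simp add: algebra_simps)
  finally show ?thesis
    by (simp add: p_def)
qed

lemma convergent_componentwise:
  fixes f :: "nat \<Rightarrow> 'd::euclidean_space"
  assumes "\<And>i. i \<in> Basis \<Longrightarrow> convergent (\<lambda>n. f n \<bullet> i)"
  shows "convergent f"
proof -
  have "(\<lambda>n. \<Sum>i\<in>Basis. (f n \<bullet> i) *\<^sub>R i) \<longlonglongrightarrow> (\<Sum>i\<in>Basis. lim (\<lambda>n. f n \<bullet> i) *\<^sub>R i)"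
    using assms by (intro tendsto_sum tendsto_scaleR tendsto_const) (simp add: convergent_LIMSEQ_iff)
  thus ?thesis
    by (auto simp: convergent_def euclidean_representation)
qed
section \<open>The rescaled iterates\<close>

lemma (in prob_space) second_moment_le_1_if_norm_le_1:
  fixes X :: "'a \<Rightarrow> 'b::real_normed_vector"
  assumes [measurable]: "X \<in> borel_measurable M" and "\<And>\<omega>. norm (X \<omega>) \<le> 1"
  shows "integrable M (\<lambda>\<omega>. (norm (X \<omega>))\<^sup>2)" and "(\<integral>\<omega>. (norm (X \<omega>))\<^sup>2 \<partial>M) \<le> 1"
proof -
  have bound: "(norm (X \<omega>))\<^sup>2 \<le> 1" for \<omega>
    using assms(2)[of \<omega>] by (simp add: power_le_one)
  show int: "integrable M (\<lambda>\<omega>. (norm (X \<omega>))\<^sup>2)"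
    by (rule integrable_const_bound[of _ 1]) (use bound in auto)
  show "(\<integral>\<omega>. (norm (X \<omega>))\<^sup>2 \<partial>M) \<le> 1"
    using integral_mono[OF int, of "\<lambda>_. 1"] bound by (simp add: prob_space)
qed

locale stoch_approx =
  fixes P :: "'w measure"
    and F :: "nat \<Rightarrow> 'w measure"
    and S :: "'s::metric_space set"
    and h :: "'d::euclidean_space \<Rightarrow> 's \<Rightarrow> 'd"
    and L K T :: real
    and a :: "nat \<Rightarrow> real"
    and x :: "nat \<Rightarrow> 'w \<Rightarrow> 'd"
    and y :: "nat \<Rightarrow> 'w \<Rightarrow> 's"
    and Mn :: "nat \<Rightarrow> 'w \<Rightarrow> 'd"
  assumes S_compact: "compact S"
    and h_cont: "continuous_on (UNIV \<times> S) (\<lambda>(u, v). h u v)"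
    and L_pos: "L > 0"
    and h_lip: "\<And>x1 x2 v. v \<in> S \<Longrightarrow> norm (h x1 v - h x2 v) \<le> L * norm (x1 - x2)"
    and a_pos: "\<And>n. a n > 0"
    and a_div: "\<not> summable a"
    and a_sq: "summable (\<lambda>n. (a n)\<^sup>2)"
    and a_le1: "\<And>n. a n \<le> 1"
    and prob: "prob_space P"
    and filt: "filtration (space P) F"
    and subalg: "\<And>n. subalgebra P (F n)"
    and y_adapted: "\<And>n. y n \<in> measurable (F n) borel"
    and y_in_S: "\<And>n \<omega>. \<omega> \<in> space P \<Longrightarrow> y n \<omega> \<in> S"
    and x0_meas: "x 0 \<in> borel_measurable (F 0)"
    and M_meas: "\<And>n. Mn (Suc n) \<in> borel_measurable (F (Suc n))"
    and M_sqint: "\<And>n. integrable P (\<lambda>\<omega>. (norm (Mn (Suc n) \<omega>))\<^sup>2)"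
    and M_mds: "\<And>n i. i \<in> Basis \<Longrightarrow>
          AE \<omega> in P. real_cond_exp P (F n) (\<lambda>\<omega>. Mn (Suc n) \<omega> \<bullet> i) \<omega> = 0"
    and K_pos: "K > 0"
    and M_var: "\<And>n. AE \<omega> in P. real_cond_exp P (F n) (\<lambda>\<omega>. (norm (Mn (Suc n) \<omega>))\<^sup>2) \<omega>
                    \<le> K * (1 + (norm (x n \<omega>))\<^sup>2)"
    and x_rec: "\<And>n \<omega>. \<omega> \<in> space P \<Longrightarrow>
          x (Suc n) \<omega> = x n \<omega> + a n *\<^sub>R (h (x n \<omega>) (y n \<omega>) + Mn (Suc n) \<omega>)"
    and T_pos: "T > 0"
begin

sublocale step_sizes a T
  using a_pos a_div a_le1 T_pos by unfold_locales

sublocale prob_space P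
  by (rule prob)

lemma measurable_P_if_measurable_F: "f \<in> borel_measurable (F k) \<Longrightarrow> f \<in> borel_measurable P"
  using measurable_from_subalg[OF subalg] by blast

lemma sigma_finite_subalgebra_F: "sigma_finite_subalgebra P (F k)"
  by (intro finite_measure_subalgebra_is_sigma_finite finite_measure_subalgebra.intro)
     (simp_all add: finite_measure_subalgebra_axioms_def subalg finite_measure_axioms)

lemma x_measurable: "x k \<in> borel_measurable (F k)"
proof (induction k)
  case 0
  show ?case by (rule x0_meas)
next
  case (Suc k)
  have [measurable]: "x k \<in> borel_measurable (F (Suc k))" "y k \<in> borel_measurable (F (Suc k))"
    using filtration_measurable_mono[OF filt _ Suc.IH] filtration_measurable_mono[OF filt _ y_adapted]
    by simp_all
  have [measurable]: "(\<lambda>\<omega>. h (x k \<omega>) (y k \<omega>)) \<in> borel_measurable (F (Suc k))"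
    by (rule borel_measurable_lipschitz_compose[OF h_cont h_lip])
       (simp_all add: filtration.space_F[OF filt] y_in_S)
  have [measurable]: "Mn (Suc k) \<in> borel_measurable (F (Suc k))"
    by (rule M_meas)
  have "(\<lambda>\<omega>. x k \<omega> + a k *\<^sub>R (h (x k \<omega>) (y k \<omega>) + Mn (Suc k) \<omega>)) \<in> borel_measurable (F (Suc k))"
    by measurable
  thus ?case
    by (rule measurable_cong[THEN iffD1, rotated]) (simp add: filtration.space_F[OF filt] x_rec)
qed

lemma x_measurable_P [measurable]: "x k \<in> borel_measurable P"
  using measurable_P_if_measurable_F x_measurable by blast

lemma Mn_measurable_P [measurable]: "Mn (Suc k) \<in> borel_measurable P"
  using measurable_P_if_measurable_F M_meas by blast

definition rscale :: "nat \<Rightarrow> 'w \<Rightarrow> real" where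
  "rscale k \<omega> = rfac a T (\<lambda>j. x j \<omega>) (blk a T k)"

definition xhat :: "nat \<Rightarrow> 'w \<Rightarrow> 'd" where
  "xhat k \<omega> = (1 / rscale k \<omega>) *\<^sub>R x k \<omega>"

lemma rscale_ge_1: "1 \<le> rscale k \<omega>"
  by (simp add: rscale_def rfac_def)

lemma rscale_measurable: "rscale k \<in> borel_measurable (F k)"
proof -
  obtain m where "m \<le> k" and m: "\<And>z :: nat \<Rightarrow> 'd. rfac a T z (blk a T k) = max (norm (z m)) 1"
    using rfac_blk_eq by blast
  have [measurable]: "x m \<in> borel_measurable (F k)"
    using filtration_measurable_mono[OF filt \<open>m \<le> k\<close> x_measurable] .
  have "rscale k = (\<lambda>\<omega>. max (norm (x m \<omega>)) 1)"
    by (simp add: rscale_def m fun_eq_iff)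
  thus ?thesis by simp
qed

lemma rscale_measurable_P [measurable]: "rscale k \<in> borel_measurable P"
  using measurable_P_if_measurable_F rscale_measurable by blast

lemma xhat_measurable_P [measurable]: "xhat k \<in> borel_measurable P"
  unfolding xhat_def by measurable

lemma norm_xhat: "norm (xhat k \<omega>) = norm (x k \<omega>) / rscale k \<omega>"
  using rscale_ge_1[of k \<omega>] by (simp add: xhat_def)

lemma norm_xhat_le_1: "rscale k \<omega> = max (norm (x k \<omega>)) 1 \<Longrightarrow> norm (xhat k \<omega>) \<le> 1"
  by (simp add: norm_xhat divide_le_eq_1 less_max_iff_disj)

lemma norm_xhat_0_le_1: "norm (xhat 0 \<omega>) \<le> 1"
  using rfac_blk_eq[of 0] by (intro norm_xhat_le_1) (auto simp: rscale_def)

lemma norm_xhat_new_block_le_1: "blk a T (Suc k) \<noteq> blk a T k \<Longrightarrow> norm (xhat (Suc k) \<omega>) \<le> 1"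
  by (intro norm_xhat_le_1) (simp add: rscale_def rfac_blk_Suc)

lemma rescaled_noise_integrable: "integrable P (\<lambda>\<omega>. (norm (Mn (Suc k) \<omega>))\<^sup>2 / (rscale k \<omega>)\<^sup>2)"
proof (rule Bochner_Integration.integrable_bound[OF M_sqint[of k]])
  have "(norm (Mn (Suc k) \<omega>))\<^sup>2 / (rscale k \<omega>)\<^sup>2 \<le> (norm (Mn (Suc k) \<omega>))\<^sup>2" for \<omega>
    using one_le_power[OF rscale_ge_1[of k \<omega>], of 2] by (simp add: divide_le_eq mult_le_cancel_left1)
  thus "AE \<omega> in P. norm ((norm (Mn (Suc k) \<omega>))\<^sup>2 / (rscale k \<omega>)\<^sup>2) \<le> norm ((norm (Mn (Suc k) \<omega>))\<^sup>2)"
    by (auto intro!: AE_I2)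
qed simp

text \<open>Since \<open>rscale k\<close> is \<open>F k\<close>-measurable, the variance bound on \<open>Mn (Suc k)\<close> passes through the
  rescaling by conditioning on \<open>F k\<close>.\<close>

lemma rescaled_noise_second_moment:
  assumes xhat_int: "integrable P (\<lambda>\<omega>. (norm (xhat k \<omega>))\<^sup>2)"
  shows "(\<integral>\<omega>. (norm (Mn (Suc k) \<omega>))\<^sup>2 / (rscale k \<omega>)\<^sup>2 \<partial>P)
           \<le> K * (1 + (\<integral>\<omega>. (norm (xhat k \<omega>))\<^sup>2 \<partial>P))"
proof -
  interpret F: sigma_finite_subalgebra P "F k"
    by (rule sigma_finite_subalgebra_F)
  define f where "f \<omega> = 1 / (rscale k \<omega>)\<^sup>2" for \<omega>
  define g where "g \<omega> = (norm (Mn (Suc k) \<omega>))\<^sup>2" for \<omega>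
  have f_bounds: "0 \<le> f \<omega>" "f \<omega> \<le> 1" for \<omega>
    using rscale_ge_1[of k \<omega>] by (auto simp: f_def power_le_one_iff)
  have f_measurable [measurable]: "f \<in> borel_measurable (F k)"
    unfolding f_def using rscale_measurable by measurable
  have [measurable]: "g \<in> borel_measurable P"
    unfolding g_def by measurable
  have fg_eq: "(\<lambda>\<omega>. f \<omega> * g \<omega>) = (\<lambda>\<omega>. (norm (Mn (Suc k) \<omega>))\<^sup>2 / (rscale k \<omega>)\<^sup>2)"
    by (simp add: f_def g_def)
  have fg_int: "integrable P (\<lambda>\<omega>. f \<omega> * g \<omega>)"
    unfolding fg_eq by (rule rescaled_noise_integrable)
  have f_int: "integrable P f"
    by (rule integrable_const_bound[of _ 1])
       (use f_bounds measurable_P_if_measurable_F[OF f_measurable] in auto)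
  have "AE \<omega> in P. f \<omega> * real_cond_exp P (F k) g \<omega> \<le> K * (f \<omega> + (norm (xhat k \<omega>))\<^sup>2)"
    using M_var[of k]
  proof eventually_elim
    case (elim \<omega>)
    hence "f \<omega> * real_cond_exp P (F k) g \<omega> \<le> f \<omega> * (K * (1 + (norm (x k \<omega>))\<^sup>2))"
      using f_bounds by (intro mult_left_mono) (simp_all add: g_def[abs_def])
    also have "\<dots> = K * (f \<omega> + (norm (xhat k \<omega>))\<^sup>2)"
      by (simp add: f_def norm_xhat power_divide field_simps add_divide_distrib)
    finally show ?case .
  qed
  hence "(\<integral>\<omega>. f \<omega> * real_cond_exp P (F k) g \<omega> \<partial>P) \<le> (\<integral>\<omega>. K * (f \<omega> + (norm (xhat k \<omega>))\<^sup>2) \<partial>P)"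
    using F.real_cond_exp_intg(1)[OF fg_int] f_int xhat_int by (intro integral_mono_AE) auto
  also have "\<dots> = K * ((\<integral>\<omega>. f \<omega> \<partial>P) + (\<integral>\<omega>. (norm (xhat k \<omega>))\<^sup>2 \<partial>P))"
    using f_int xhat_int by simp
  also have "\<dots> \<le> K * (1 + (\<integral>\<omega>. (norm (xhat k \<omega>))\<^sup>2 \<partial>P))"
    using integral_mono[OF f_int, of "\<lambda>_. 1"] f_bounds K_pos by (simp add: prob_space)
  finally show ?thesis
    using F.real_cond_exp_intg(2)[OF fg_int] by (simp add: fg_eq)
qed

lemma norm_xhat_Suc_square_le:
  assumes same_block: "blk a T (Suc k) = blk a T k" and \<omega>: "\<omega> \<in> space P"
    and "0 \<le> H0" and H0: "\<And>u v. v \<in> S \<Longrightarrow> norm (h u v) \<le> H0 + L * norm u"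
  shows "(norm (xhat (Suc k) \<omega>))\<^sup>2 \<le> (1 + a k * (1 + 6 * L\<^sup>2)) * (norm (xhat k \<omega>))\<^sup>2
           + a k * (6 * H0\<^sup>2) + a k * (6 * ((norm (Mn (Suc k) \<omega>))\<^sup>2 / (rscale k \<omega>)\<^sup>2))"
proof -
  define r where "r = rscale k \<omega>"
  define w where "w = (1 / r) *\<^sub>R h (x k \<omega>) (y k \<omega>)"
  define m where "m = (1 / r) *\<^sub>R Mn (Suc k) \<omega>"
  have "1 \<le> r"
    using rscale_ge_1 by (simp add: r_def)
  have "xhat (Suc k) \<omega> = xhat k \<omega> + a k *\<^sub>R (w + m)"
    unfolding xhat_def w_def m_def r_def rscale_def same_block x_rec[OF \<omega>]
    by (simp add: algebra_simps)
  moreover have "norm w \<le> H0 + L * norm (xhat k \<omega>)"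
  proof -
    have "norm w \<le> (H0 + L * norm (x k \<omega>)) / r"
      using H0[OF y_in_S[OF \<omega>]] \<open>1 \<le> r\<close> by (simp add: w_def divide_right_mono)
    also have "\<dots> = H0 / r + L * norm (xhat k \<omega>)"
      by (simp add: norm_xhat r_def add_divide_distrib)
    also have "H0 / r \<le> H0"
      using \<open>1 \<le> r\<close> \<open>0 \<le> H0\<close> by (simp add: divide_le_eq mult_le_cancel_left1)
    finally show ?thesis by simp
  qed
  moreover have "(norm m)\<^sup>2 = (norm (Mn (Suc k) \<omega>))\<^sup>2 / (rscale k \<omega>)\<^sup>2"
    using \<open>1 \<le> r\<close> by (simp add: m_def r_def power_divide)
  ultimately show ?thesis
    using norm_add_scaleR_square_le[of "a k" w H0 L "xhat k \<omega>" m] a_pos[of k] a_le1[of k]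
      \<open>0 \<le> H0\<close> L_pos
    by simp
qed

lemma xhat_second_moment_Suc:
  assumes "0 \<le> H0" and H0: "\<And>u v. v \<in> S \<Longrightarrow> norm (h u v) \<le> H0 + L * norm u"
    and same_block: "blk a T (Suc k) = blk a T k"
    and xhat_int: "integrable P (\<lambda>\<omega>. (norm (xhat k \<omega>))\<^sup>2)"
  shows "integrable P (\<lambda>\<omega>. (norm (xhat (Suc k) \<omega>))\<^sup>2)"
    and "1 + (\<integral>\<omega>. (norm (xhat (Suc k) \<omega>))\<^sup>2 \<partial>P)
           \<le> (1 + a k * (1 + 6 * L\<^sup>2 + 6 * H0\<^sup>2 + 6 * K)) * (1 + (\<integral>\<omega>. (norm (xhat k \<omega>))\<^sup>2 \<partial>P))"
proof -
  define E where "E = (\<integral>\<omega>. (norm (xhat k \<omega>))\<^sup>2 \<partial>P)"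
  define q where "q \<omega> = (norm (Mn (Suc k) \<omega>))\<^sup>2 / (rscale k \<omega>)\<^sup>2" for \<omega>
  define R where "R \<omega> = (1 + a k * (1 + 6 * L\<^sup>2)) * (norm (xhat k \<omega>))\<^sup>2
      + a k * (6 * H0\<^sup>2) + a k * (6 * q \<omega>)" for \<omega>
  have q_int: "integrable P q"
    unfolding q_def by (rule rescaled_noise_integrable)
  have q_le: "(\<integral>\<omega>. q \<omega> \<partial>P) \<le> K * (1 + E)"
    unfolding q_def E_def by (rule rescaled_noise_second_moment[OF xhat_int])
  have R_int: "integrable P R"
    unfolding R_def using xhat_int q_int by auto
  have pointwise: "(norm (xhat (Suc k) \<omega>))\<^sup>2 \<le> R \<omega>" if "\<omega> \<in> space P" for \<omega>
    unfolding R_def q_def by (rule norm_xhat_Suc_square_le[OF same_block that \<open>0 \<le> H0\<close> H0])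
  show int: "integrable P (\<lambda>\<omega>. (norm (xhat (Suc k) \<omega>))\<^sup>2)"
    by (rule Bochner_Integration.integrable_bound[OF R_int])
       (auto intro!: AE_I2 order_trans[OF _ abs_ge_self] pointwise)
  have "(\<integral>\<omega>. (norm (xhat (Suc k) \<omega>))\<^sup>2 \<partial>P) \<le> (\<integral>\<omega>. R \<omega> \<partial>P)"
    by (rule integral_mono[OF int R_int pointwise])
  also have "\<dots> = (1 + a k * (1 + 6 * L\<^sup>2)) * E + a k * (6 * H0\<^sup>2) + a k * (6 * (\<integral>\<omega>. q \<omega> \<partial>P))"
    unfolding R_def E_def using xhat_int q_int by (simp add: prob_space)
  also have "\<dots> \<le> (1 + a k * (1 + 6 * L\<^sup>2)) * E + a k * (6 * H0\<^sup>2) + a k * (6 * (K * (1 + E)))"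
    using q_le a_pos[of k] by simp
  finally have "1 + (\<integral>\<omega>. (norm (xhat (Suc k) \<omega>))\<^sup>2 \<partial>P)
      \<le> (1 + a k * (1 + 6 * L\<^sup>2 + 6 * H0\<^sup>2 + 6 * K)) * (1 + E) - a k * (1 + 6 * L\<^sup>2) - a k * E * (6 * H0\<^sup>2)"
    by (simp add: algebra_simps)
  moreover have "0 \<le> a k * (1 + 6 * L\<^sup>2) + a k * E * (6 * H0\<^sup>2)"
    using a_pos[of k] by (simp add: E_def)
  ultimately show "1 + (\<integral>\<omega>. (norm (xhat (Suc k) \<omega>))\<^sup>2 \<partial>P)
      \<le> (1 + a k * (1 + 6 * L\<^sup>2 + 6 * H0\<^sup>2 + 6 * K)) * (1 + (\<integral>\<omega>. (norm (xhat k \<omega>))\<^sup>2 \<partial>P))"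
    unfolding E_def by linarith
qed

lemma xhat_second_moment_block_start:
  assumes "0 \<le> C" and "\<And>\<omega>. norm (xhat k \<omega>) \<le> 1"
  shows "integrable P (\<lambda>\<omega>. (norm (xhat k \<omega>))\<^sup>2)
      \<and> 1 + (\<integral>\<omega>. (norm (xhat k \<omega>))\<^sup>2 \<partial>P) \<le> 2 * exp (C * (tseq a k - Tseq a T (blk a T k)))"
proof -
  have "1 \<le> exp (C * (tseq a k - Tseq a T (blk a T k)))"
    using assms(1) tseq_minus_Tseq_blk_bounds(1)[of k] by simp
  thus ?thesis
    using second_moment_le_1_if_norm_le_1[OF xhat_measurable_P assms(2)] by linarith
qed

text \<open>A discrete Gronwall argument within each block, which the rescaled iterate starts in the
  unit ball.\<close>

lemma xhat_second_moment_exp_bound: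
  obtains C where "0 \<le> C" and "\<And>k. integrable P (\<lambda>\<omega>. (norm (xhat k \<omega>))\<^sup>2)"
    and "\<And>k. 1 + (\<integral>\<omega>. (norm (xhat k \<omega>))\<^sup>2 \<partial>P) \<le> 2 * exp (C * (tseq a k - Tseq a T (blk a T k)))"
proof -
  obtain H0 where "0 \<le> H0" and H0: "\<And>u v. v \<in> S \<Longrightarrow> norm (h u v) \<le> H0 + L * norm u"
    using continuous_lipschitz_linear_growth[OF S_compact h_cont h_lip] by blast
  define C where "C = 1 + 6 * L\<^sup>2 + 6 * H0\<^sup>2 + 6 * K"
  have "0 \<le> C"
    using K_pos by (simp add: C_def)
  have "integrable P (\<lambda>\<omega>. (norm (xhat k \<omega>))\<^sup>2)
        \<and> 1 + (\<integral>\<omega>. (norm (xhat k \<omega>))\<^sup>2 \<partial>P) \<le> 2 * exp (C * (tseq a k - Tseq a T (blk a T k)))" for k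
  proof (induction k)
    case 0
    show ?case by (rule xhat_second_moment_block_start[OF \<open>0 \<le> C\<close> norm_xhat_0_le_1])
  next
    case (Suc k)
    show ?case
    proof (cases "blk a T (Suc k) = blk a T k")
      case False
      thus ?thesis
        by (intro xhat_second_moment_block_start[OF \<open>0 \<le> C\<close>] norm_xhat_new_block_le_1)
    next
      case True
      have IH_int: "integrable P (\<lambda>\<omega>. (norm (xhat k \<omega>))\<^sup>2)"
        using Suc.IH by blast
      have step_int: "integrable P (\<lambda>\<omega>. (norm (xhat (Suc k) \<omega>))\<^sup>2)"
        using xhat_second_moment_Suc(1)[of H0 k] \<open>0 \<le> H0\<close> H0 True IH_int by blast
      have "1 + (\<integral>\<omega>. (norm (xhat (Suc k) \<omega>))\<^sup>2 \<partial>P)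
          \<le> (1 + a k * C) * (1 + (\<integral>\<omega>. (norm (xhat k \<omega>))\<^sup>2 \<partial>P))"
        using xhat_second_moment_Suc(2)[of H0 k] \<open>0 \<le> H0\<close> H0 True IH_int unfolding C_def by blast
      also have "\<dots> \<le> exp (a k * C) * (2 * exp (C * (tseq a k - Tseq a T (blk a T k))))"
        using Suc.IH by (intro mult_mono exp_ge_add_one_self) simp_all
      also have "\<dots> = 2 * exp (C * (tseq a (Suc k) - Tseq a T (blk a T (Suc k))))"
        by (simp add: True tseq_Suc exp_add[symmetric] algebra_simps)
      finally show ?thesis
        using step_int by blast
    qed
  qed
  with \<open>0 \<le> C\<close> that show ?thesis by blast
qed

lemma rescaled_noise_second_moment_bounded:
  obtains B where "\<And>k. (\<integral>\<omega>. (norm (Mn (Suc k) \<omega>))\<^sup>2 / (rscale k \<omega>)\<^sup>2 \<partial>P) \<le> B"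
proof -
  obtain C where "0 \<le> C" and xhat_int: "\<And>k. integrable P (\<lambda>\<omega>. (norm (xhat k \<omega>))\<^sup>2)"
    and exp_bound: "\<And>k. 1 + (\<integral>\<omega>. (norm (xhat k \<omega>))\<^sup>2 \<partial>P) \<le> 2 * exp (C * (tseq a k - Tseq a T (blk a T k)))"
    using xhat_second_moment_exp_bound by blast
  have "(\<integral>\<omega>. (norm (Mn (Suc k) \<omega>))\<^sup>2 / (rscale k \<omega>)\<^sup>2 \<partial>P) \<le> K * (2 * exp (C * (T + 1)))" for k
  proof -
    have "exp (C * (tseq a k - Tseq a T (blk a T k))) \<le> exp (C * (T + 1))"
      using tseq_minus_Tseq_blk_bounds(2)[of k] \<open>0 \<le> C\<close> by (simp add: mult_left_mono)
    hence "1 + (\<integral>\<omega>. (norm (xhat k \<omega>))\<^sup>2 \<partial>P) \<le> 2 * exp (C * (T + 1))"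
      using exp_bound[of k] by linarith
    hence "K * (1 + (\<integral>\<omega>. (norm (xhat k \<omega>))\<^sup>2 \<partial>P)) \<le> K * (2 * exp (C * (T + 1)))"
      using K_pos by simp
    thus ?thesis
      using rescaled_noise_second_moment[OF xhat_int] by (rule order_trans[rotated])
  qed
  thus ?thesis
    using that by blast
qed

definition noise_coord :: "'d \<Rightarrow> nat \<Rightarrow> 'w \<Rightarrow> real" where
  "noise_coord i k \<omega> = (a k / rscale k \<omega>) * (Mn (Suc k) \<omega> \<bullet> i)"

lemma zeta_hat_inner: "zeta_hat a T (\<lambda>k. x k \<omega>) (\<lambda>k. Mn k \<omega>) n \<bullet> i = (\<Sum>k<n. noise_coord i k \<omega>)"
  by (simp add: zeta_hat_def Mhat_def rscale_def noise_coord_def inner_sum_left)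

lemma noise_coord_measurable: "noise_coord i k \<in> borel_measurable (F (Suc k))"
proof -
  have [measurable]: "rscale k \<in> borel_measurable (F (Suc k))"
    using filtration_measurable_mono[OF filt _ rscale_measurable[of k]] by simp
  have [measurable]: "Mn (Suc k) \<in> borel_measurable (F (Suc k))"
    by (rule M_meas)
  show ?thesis
    unfolding noise_coord_def by measurable
qed

lemma noise_coord_measurable_P [measurable]: "noise_coord i k \<in> borel_measurable P"
  using measurable_P_if_measurable_F noise_coord_measurable by blast

lemma noise_coord_square_le:
  assumes "i \<in> Basis"
  shows "(noise_coord i k \<omega>)\<^sup>2 \<le> (a k)\<^sup>2 * ((norm (Mn (Suc k) \<omega>))\<^sup>2 / (rscale k \<omega>)\<^sup>2)"
proof -
  have "(Mn (Suc k) \<omega> \<bullet> i)\<^sup>2 \<le> (norm (Mn (Suc k) \<omega>))\<^sup>2"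
    using power_mono[where n=2, OF Basis_le_norm[OF assms] abs_ge_zero] by simp
  hence "(Mn (Suc k) \<omega> \<bullet> i)\<^sup>2 / (rscale k \<omega>)\<^sup>2 \<le> (norm (Mn (Suc k) \<omega>))\<^sup>2 / (rscale k \<omega>)\<^sup>2"
    by (rule divide_right_mono) simp
  hence "(a k)\<^sup>2 * ((Mn (Suc k) \<omega> \<bullet> i)\<^sup>2 / (rscale k \<omega>)\<^sup>2)
      \<le> (a k)\<^sup>2 * ((norm (Mn (Suc k) \<omega>))\<^sup>2 / (rscale k \<omega>)\<^sup>2)"
    by (rule mult_left_mono) simp
  thus ?thesis
    by (simp add: noise_coord_def power_divide power_mult_distrib)
qed

lemma noise_coord_variance_le:
  assumes "i \<in> Basis"
  shows "integrable P (\<lambda>\<omega>. (noise_coord i k \<omega>)\<^sup>2)"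
    and "(\<integral>\<omega>. (noise_coord i k \<omega>)\<^sup>2 \<partial>P)
           \<le> (a k)\<^sup>2 * (\<integral>\<omega>. (norm (Mn (Suc k) \<omega>))\<^sup>2 / (rscale k \<omega>)\<^sup>2 \<partial>P)"
proof -
  note int = rescaled_noise_integrable[of k]
  show sq_int: "integrable P (\<lambda>\<omega>. (noise_coord i k \<omega>)\<^sup>2)"
  proof (rule Bochner_Integration.integrable_bound[OF integrable_mult_right[OF int, of "(a k)\<^sup>2"]])
    show "AE \<omega> in P. norm ((noise_coord i k \<omega>)\<^sup>2)
            \<le> norm ((a k)\<^sup>2 * ((norm (Mn (Suc k) \<omega>))\<^sup>2 / (rscale k \<omega>)\<^sup>2))"
      using noise_coord_square_le[OF assms(1)] by (auto intro!: AE_I2)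
  qed simp
  have "(\<integral>\<omega>. (noise_coord i k \<omega>)\<^sup>2 \<partial>P)
          \<le> (\<integral>\<omega>. (a k)\<^sup>2 * ((norm (Mn (Suc k) \<omega>))\<^sup>2 / (rscale k \<omega>)\<^sup>2) \<partial>P)"
    by (rule integral_mono[OF sq_int integrable_mult_right[OF int] noise_coord_square_le[OF assms(1)]])
  thus "(\<integral>\<omega>. (noise_coord i k \<omega>)\<^sup>2 \<partial>P)
          \<le> (a k)\<^sup>2 * (\<integral>\<omega>. (norm (Mn (Suc k) \<omega>))\<^sup>2 / (rscale k \<omega>)\<^sup>2 \<partial>P)"
    by (simp only: integral_mult_right_zero)
qed

lemma noise_coord_orthogonal:
  assumes "i \<in> Basis" and g: "g \<in> borel_measurable (F k)"
    and int: "integrable P (\<lambda>\<omega>. g \<omega> * noise_coord i k \<omega>)"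
  shows "(\<integral>\<omega>. g \<omega> * noise_coord i k \<omega> \<partial>P) = 0"
proof -
  interpret F: sigma_finite_subalgebra P "F k"
    by (rule sigma_finite_subalgebra_F)
  define f where "f \<omega> = g \<omega> * (a k / rscale k \<omega>)" for \<omega>
  define u where "u \<omega> = Mn (Suc k) \<omega> \<bullet> i" for \<omega>
  have f_measurable [measurable]: "f \<in> borel_measurable (F k)"
    unfolding f_def using g rscale_measurable[of k] by measurable
  have u_measurable [measurable]: "u \<in> borel_measurable P"
    unfolding u_def by measurable
  have eq: "(\<lambda>\<omega>. g \<omega> * noise_coord i k \<omega>) = (\<lambda>\<omega>. f \<omega> * u \<omega>)"
    by (auto simp: f_def u_def noise_coord_def)
  have fu_int: "integrable P (\<lambda>\<omega>. f \<omega> * u \<omega>)"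
    using int eq by simp
  have "(\<integral>\<omega>. f \<omega> * u \<omega> \<partial>P) = (\<integral>\<omega>. f \<omega> * real_cond_exp P (F k) u \<omega> \<partial>P)"
    using F.real_cond_exp_intg(2)[OF fu_int f_measurable u_measurable] by simp
  also have "\<dots> = (\<integral>\<omega>. 0 \<partial>P)"
    using M_mds[OF assms(1), of k] measurable_P_if_measurable_F[OF f_measurable]
    by (intro integral_cong_AE) (auto simp: u_def[abs_def])
  finally show ?thesis
    using eq by simp
qed

lemma noise_coord_sq_int_mart_diff:
  assumes "i \<in> Basis"
  shows "sq_int_mart_diff P F (noise_coord i)"
  by (rule sq_int_mart_diff.intro)
     (use prob filt subalg noise_coord_measurable noise_coord_variance_le(1)[OF assms]
        noise_coord_orthogonal[OF assms] in auto)

lemma summable_noise_coord_variance: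
  assumes "i \<in> Basis"
  shows "summable (\<lambda>k. \<integral>\<omega>. (noise_coord i k \<omega>)\<^sup>2 \<partial>P)"
proof -
  obtain B where bound: "\<And>k. (\<integral>\<omega>. (norm (Mn (Suc k) \<omega>))\<^sup>2 / (rscale k \<omega>)\<^sup>2 \<partial>P) \<le> B"
    using rescaled_noise_second_moment_bounded by blast
  have "norm (\<integral>\<omega>. (noise_coord i k \<omega>)\<^sup>2 \<partial>P) \<le> B * (a k)\<^sup>2" for k
  proof -
    have "norm (\<integral>\<omega>. (noise_coord i k \<omega>)\<^sup>2 \<partial>P) = (\<integral>\<omega>. (noise_coord i k \<omega>)\<^sup>2 \<partial>P)"
      by (simp add: Bochner_Integration.integral_nonneg)
    also have "\<dots> \<le> (a k)\<^sup>2 * (\<integral>\<omega>. (norm (Mn (Suc k) \<omega>))\<^sup>2 / (rscale k \<omega>)\<^sup>2 \<partial>P)"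
      by (rule noise_coord_variance_le(2)[OF assms])
    also have "\<dots> \<le> (a k)\<^sup>2 * B"
      using bound by (rule mult_left_mono) simp
    finally show ?thesis
      by (simp add: mult.commute)
  qed
  thus ?thesis
    by (intro summable_comparison_test[OF _ summable_mult[OF a_sq]]) auto
qed

lemma AE_convergent_noise_coord_sum:
  assumes "i \<in> Basis"
  shows "AE \<omega> in P. convergent (\<lambda>n. \<Sum>k<n. noise_coord i k \<omega>)"
proof -
  interpret coord: sq_int_mart_diff P F "noise_coord i"
    by (rule noise_coord_sq_int_mart_diff[OF assms])
  show ?thesis
    using coord.AE_convergent_psum[OF summable_noise_coord_variance[OF assms]]
    unfolding coord.psum_def .
qed

end

theorem lemma4:
  fixes P :: "'w measure"
    and F :: "nat \<Rightarrow> 'w measure"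
    and S :: "'s::metric_space set"
    and h :: "'d::euclidean_space \<Rightarrow> 's \<Rightarrow> 'd"
    and L K T :: real
    and a :: "nat \<Rightarrow> real"
    and x :: "nat \<Rightarrow> 'w \<Rightarrow> 'd"
    and y :: "nat \<Rightarrow> 'w \<Rightarrow> 's"
    and Mn :: "nat \<Rightarrow> 'w \<Rightarrow> 'd"
  assumes S_compact: "compact S"
    and h_cont: "continuous_on (UNIV \<times> S) (\<lambda>(u, v). h u v)"
    and L_pos: "L > 0"
    and h_lip: "\<And>x1 x2 v. v \<in> S \<Longrightarrow> norm (h x1 v - h x2 v) \<le> L * norm (x1 - x2)"
    and a_pos: "\<And>n. a n > 0"
    and a_div: "\<not> summable a"
    and a_sq: "summable (\<lambda>n. (a n)\<^sup>2)"
    and a_le1: "\<And>n. a n \<le> 1"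
    and prob: "prob_space P"
    and filt: "filtration (space P) F"
    and subalg: "\<And>n. subalgebra P (F n)"
    and y_adapted: "\<And>n. y n \<in> measurable (F n) borel"
    and y_in_S: "\<And>n \<omega>. \<omega> \<in> space P \<Longrightarrow> y n \<omega> \<in> S"
    and x0_meas: "x 0 \<in> borel_measurable (F 0)"
    and M_meas: "\<And>n. Mn (Suc n) \<in> borel_measurable (F (Suc n))"
    and M_sqint: "\<And>n. integrable P (\<lambda>\<omega>. (norm (Mn (Suc n) \<omega>))\<^sup>2)"
    and M_mds: "\<And>n i. i \<in> Basis \<Longrightarrow>
          AE \<omega> in P. real_cond_exp P (F n) (\<lambda>\<omega>. Mn (Suc n) \<omega> \<bullet> i) \<omega> = 0"
    and K_pos: "K > 0"
    and M_var: "\<And>n. AE \<omega> in P. real_cond_exp P (F n) (\<lambda>\<omega>. (norm (Mn (Suc n) \<omega>))\<^sup>2) \<omega>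
                    \<le> K * (1 + (norm (x n \<omega>))\<^sup>2)"
    and x_rec: "\<And>n \<omega>. \<omega> \<in> space P \<Longrightarrow>
          x (Suc n) \<omega> = x n \<omega> + a n *\<^sub>R (h (x n \<omega>) (y n \<omega>) + Mn (Suc n) \<omega>)"
    and T_pos: "T > 0"
  shows "AE \<omega> in P. convergent (\<lambda>n. zeta_hat a T (\<lambda>k. x k \<omega>) (\<lambda>k. Mn k \<omega>) n)"
proof -
  interpret stoch_approx P F S h L K T a x y Mn
    by (rule stoch_approx.intro[OF assms])
  have "AE \<omega> in P. \<forall>i\<in>Basis. convergent (\<lambda>n. \<Sum>k<n. noise_coord i k \<omega>)"
    by (simp add: eventually_ball_finite_distrib AE_convergent_noise_coord_sum)
  thus ?thesis
  proof (rule eventually_mono)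
    fix \<omega> assume "\<forall>i\<in>Basis. convergent (\<lambda>n. \<Sum>k<n. noise_coord i k \<omega>)"
    thus "convergent (\<lambda>n. zeta_hat a T (\<lambda>k. x k \<omega>) (\<lambda>k. Mn k \<omega>) n)"
      by (intro convergent_componentwise[of "zeta_hat a T (\<lambda>k. x k \<omega>) (\<lambda>k. Mn k \<omega>)"])
         (simp add: zeta_hat_inner)
  qed
qed

end
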